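(* Let $X$ and $Y$ be quasi-isometric semimetric spaces. If $X$ is quasi-metric, then $Y$ is quasi-metric.
   Context: A semimetric space is a set $X$ with $d:X\times X\to\mathbb{R}^{\ge0}\cup\{\infty\}$ such that $d(x,y)=0$ iff $x=y$ and $d(x,z)\le d(x,y)+d(y,z)$ (no symmetry; $\infty$ absorbs addition and multiplication by positive reals). It is strongly connected if $d(x,y)<\infty$ for all $x,y$, and quasi-metric if it is strongly connected and there exist $1\le\lambda<\infty$, $0\le\epsilon<\infty$ with $d(y,x)\le\lambda d(x,y)+\epsilon$ for all $x,y$. A map $f:X\to X'$ is a quasi-isometry if there are $1\le\lambda<\infty$, $0<\epsilon<\infty$, $0\le\mu<\infty$ with $\frac1\lambda d(x,y)-\epsilon\le d'(f(x),f(y))\le\lambda d(x,y)+\epsilon$ for all $x,y$, and for every $x'\in X'$ some $x\in X$ with $\max(d'(x',f(x)),d'(f(x),x'))\le\mu$; $X$ and $X'$ are quasi-isometric if such a map exists. *)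

theory Defs
  imports Main "HOL-Library.Extended_Real"
begin

text \<open>Distances take values in [0, \<infinity>], modelled as extended reals (ereal);
  in ereal, \<infinity> absorbs addition with nonnegative values and multiplication by positive reals.
  A space is a carrier set X together with a distance function d (only its values on X matter).\<close>

definition semimetric :: "'a set \<Rightarrow> ('a \<Rightarrow> 'a \<Rightarrow> ereal) \<Rightarrow> bool" where
  "semimetric X d \<longleftrightarrow>
     (\<forall>x\<in>X. \<forall>y\<in>X. d x y \<ge> 0 \<and> d x y \<noteq> -\<infinity>) \<and>
     (\<forall>x\<in>X. \<forall>y\<in>X. d x y = 0 \<longleftrightarrow> x = y) \<and>
     (\<forall>x\<in>X. \<forall>y\<in>X. \<forall>z\<in>X. d x z \<le> d x y + d y z)"

definition strongly_connected :: "'a set \<Rightarrow> ('a \<Rightarrow> 'a \<Rightarrow> ereal) \<Rightarrow> bool" where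
  "strongly_connected X d \<longleftrightarrow> (\<forall>x\<in>X. \<forall>y\<in>X. d x y < \<infinity>)"

definition quasi_metric :: "'a set \<Rightarrow> ('a \<Rightarrow> 'a \<Rightarrow> ereal) \<Rightarrow> bool" where
  "quasi_metric X d \<longleftrightarrow> strongly_connected X d \<and>
     (\<exists>lam::real. \<exists>eps::real. 1 \<le> lam \<and> 0 \<le> eps \<and>
        (\<forall>x\<in>X. \<forall>y\<in>X. d y x \<le> ereal lam * d x y + ereal eps))"

definition quasi_isometry ::
  "'a set \<Rightarrow> ('a \<Rightarrow> 'a \<Rightarrow> ereal) \<Rightarrow> 'b set \<Rightarrow> ('b \<Rightarrow> 'b \<Rightarrow> ereal) \<Rightarrow> ('a \<Rightarrow> 'b) \<Rightarrow> bool" where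
  "quasi_isometry X d X' d' f \<longleftrightarrow> f ` X \<subseteq> X' \<and>
     (\<exists>lam::real. \<exists>eps::real. \<exists>mu::real. 1 \<le> lam \<and> 0 < eps \<and> 0 \<le> mu \<and>
        (\<forall>x\<in>X. \<forall>y\<in>X.
            ereal (1 / lam) * d x y - ereal eps \<le> d' (f x) (f y) \<and>
            d' (f x) (f y) \<le> ereal lam * d x y + ereal eps) \<and>
        (\<forall>x'\<in>X'. \<exists>x\<in>X. max (d' x' (f x)) (d' (f x) x') \<le> ereal mu))"

definition quasi_isometric ::
  "'a set \<Rightarrow> ('a \<Rightarrow> 'a \<Rightarrow> ereal) \<Rightarrow> 'b set \<Rightarrow> ('b \<Rightarrow> 'b \<Rightarrow> ereal) \<Rightarrow> bool" where
  "quasi_isometric X d X' d' \<longleftrightarrow> (\<exists>f. quasi_isometry X d X' d' f)"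

end

theory Submission
  imports Defs
begin

text \<open>Every point of Y lies within distance \<mu> (in both directions) of some image point f x.
  Going from y2 back to y1 through such nearby points f x2, f x1 costs the backward distance
  between x2 and x1, which the quasi-metric inequality in X bounds by the forward distance,
  and that in turn by the forward distance from y1 to y2 up to the quasi-isometry constants.
  The same detour through X shows that all distances in Y are finite.\<close>

lemma semimetric_nonneg: "semimetric X d \<Longrightarrow> x \<in> X \<Longrightarrow> y \<in> X \<Longrightarrow> 0 \<le> d x y"
  unfolding semimetric_def by blast

lemma semimetric_triangle:
  "semimetric X d \<Longrightarrow> x \<in> X \<Longrightarrow> y \<in> X \<Longrightarrow> z \<in> X \<Longrightarrow> d x z \<le> d x y + d y z"
  unfolding semimetric_def by blast

lemma quasi_isometryE:
  assumes "quasi_isometry X d Y e f"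
  obtains lam eps mu :: real where "f ` X \<subseteq> Y" "1 \<le> lam" "0 < eps" "0 \<le> mu"
    and "\<And>x y. x \<in> X \<Longrightarrow> y \<in> X \<Longrightarrow> ereal (1 / lam) * d x y - ereal eps \<le> e (f x) (f y)"
    and "\<And>x y. x \<in> X \<Longrightarrow> y \<in> X \<Longrightarrow> e (f x) (f y) \<le> ereal lam * d x y + ereal eps"
    and "\<And>y. y \<in> Y \<Longrightarrow> \<exists>x\<in>X. e y (f x) \<le> ereal mu \<and> e (f x) y \<le> ereal mu"
  using assms unfolding quasi_isometry_def by (metis max.bounded_iff)

lemma quasi_isometry_strongly_connected:
  assumes "semimetric Y e" "quasi_isometry X d Y e f" "strongly_connected X d"
  shows "strongly_connected Y e"
  unfolding strongly_connected_def
proof (intro ballI)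
  obtain lam eps mu where fY: "f ` X \<subseteq> Y" and lam: "1 \<le> lam"
    and upper: "\<And>x y. x \<in> X \<Longrightarrow> y \<in> X \<Longrightarrow> e (f x) (f y) \<le> ereal lam * d x y + ereal eps"
    and net: "\<And>y. y \<in> Y \<Longrightarrow> \<exists>x\<in>X. e y (f x) \<le> ereal mu \<and> e (f x) y \<le> ereal mu"
    using quasi_isometryE[OF assms(2)] by metis
  fix y1 y2 assume y: "y1 \<in> Y" "y2 \<in> Y"
  obtain x1 x2 where x: "x1 \<in> X" "x2 \<in> X"
    and near: "e y1 (f x1) \<le> ereal mu" "e (f x2) y2 \<le> ereal mu"
    using net y by blast
  have fx: "f x1 \<in> Y" "f x2 \<in> Y" using fY x by auto
  have "d x1 x2 < \<infinity>" using assms(3) x unfolding strongly_connected_def by blast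
  then have "ereal lam * d x1 x2 + ereal eps < \<infinity>"
    using lam by (cases "d x1 x2") auto
  have "e y1 y2 \<le> e y1 (f x1) + (e (f x1) (f x2) + e (f x2) y2)"
    using semimetric_triangle[OF assms(1)] fx y by (metis add_left_mono order_trans)
  also have "\<dots> \<le> ereal mu + ((ereal lam * d x1 x2 + ereal eps) + ereal mu)"
    using near upper[OF x] by (intro add_mono) auto
  also have "\<dots> < \<infinity>"
    using \<open>ereal lam * d x1 x2 + ereal eps < \<infinity>\<close> by simp
  finally show "e y1 y2 < \<infinity>" .
qed

lemma strongly_connected_semimetric_real:
  assumes "semimetric X d" "strongly_connected X d" "x \<in> X" "y \<in> X"
  shows "d x y = ereal (real_of_ereal (d x y))"
  using semimetric_nonneg[OF assms(1,3,4)] assms(2-4)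
  unfolding strongly_connected_def by (cases "d x y") auto

lemma quasi_isometry_real_bounds:
  assumes "quasi_isometry X d Y e f"
    and dX: "\<And>x y. x \<in> X \<Longrightarrow> y \<in> X \<Longrightarrow> d x y = ereal (dX x y)"
    and dY: "\<And>x y. x \<in> Y \<Longrightarrow> y \<in> Y \<Longrightarrow> e x y = ereal (dY x y)"
  obtains lam eps mu :: real where "f ` X \<subseteq> Y" "1 \<le> lam" "0 \<le> eps" "0 \<le> mu"
    and "\<And>x y. x \<in> X \<Longrightarrow> y \<in> X \<Longrightarrow> dX x y \<le> lam * (dY (f x) (f y) + eps)"
    and "\<And>x y. x \<in> X \<Longrightarrow> y \<in> X \<Longrightarrow> dY (f x) (f y) \<le> lam * dX x y + eps"
    and "\<And>y. y \<in> Y \<Longrightarrow> \<exists>x\<in>X. dY y (f x) \<le> mu \<and> dY (f x) y \<le> mu"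
proof -
  obtain lam eps mu where fY: "f ` X \<subseteq> Y" and lam: "1 \<le> lam" and eps: "0 < eps" and mu: "0 \<le> mu"
    and lower: "\<And>x y. x \<in> X \<Longrightarrow> y \<in> X \<Longrightarrow> ereal (1 / lam) * d x y - ereal eps \<le> e (f x) (f y)"
    and upper: "\<And>x y. x \<in> X \<Longrightarrow> y \<in> X \<Longrightarrow> e (f x) (f y) \<le> ereal lam * d x y + ereal eps"
    and net: "\<And>y. y \<in> Y \<Longrightarrow> \<exists>x\<in>X. e y (f x) \<le> ereal mu \<and> e (f x) y \<le> ereal mu"
    using quasi_isometryE[OF assms(1)] by metis
  have fx: "f x \<in> Y" if "x \<in> X" for x using fY that by auto
  show thesis
  proof (rule that[OF fY lam _ mu])
    show "0 \<le> eps" using eps by simp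
    show "dX x y \<le> lam * (dY (f x) (f y) + eps)" if "x \<in> X" "y \<in> X" for x y
    proof -
      have "dX x y / lam \<le> dY (f x) (f y) + eps"
        using lower[OF that] dX[OF that] dY[OF fx fx] that by simp
      then show ?thesis using lam by (simp add: divide_le_eq mult.commute)
    qed
    show "dY (f x) (f y) \<le> lam * dX x y + eps" if "x \<in> X" "y \<in> X" for x y
      using upper[OF that] dX[OF that] dY[OF fx fx] that by simp
    show "\<exists>x\<in>X. dY y (f x) \<le> mu \<and> dY (f x) y \<le> mu" if "y \<in> Y" for y
      using net[OF that] dY fx that by fastforce
  qed
qed

lemma quasi_metric_realE:
  assumes "quasi_metric X d"
    and dX: "\<And>x y. x \<in> X \<Longrightarrow> y \<in> X \<Longrightarrow> d x y = ereal (dX x y)"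
  obtains L E :: real where "1 \<le> L" "0 \<le> E"
    "\<And>x y. x \<in> X \<Longrightarrow> y \<in> X \<Longrightarrow> dX y x \<le> L * dX x y + E"
proof -
  obtain L E where "1 \<le> L" "0 \<le> E"
    and rev: "\<And>x y. x \<in> X \<Longrightarrow> y \<in> X \<Longrightarrow> d y x \<le> ereal L * d x y + ereal E"
    using assms(1) unfolding quasi_metric_def by metis
  moreover have "dX y x \<le> L * dX x y + E" if "x \<in> X" "y \<in> X" for x y
    using rev[OF that] dX that by simp
  ultimately show thesis using that by blast
qed

lemma quasi_metric_realI:
  assumes dX: "\<And>x y. x \<in> X \<Longrightarrow> y \<in> X \<Longrightarrow> d x y = ereal (dX x y)"
    and "1 \<le> L" "0 \<le> E" "\<And>x y. x \<in> X \<Longrightarrow> y \<in> X \<Longrightarrow> dX y x \<le> L * dX x y + E"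
  shows "quasi_metric X d"
  unfolding quasi_metric_def strongly_connected_def
  using assms by (intro conjI exI ballI) auto

lemma semimetric_real_triangle:
  assumes "semimetric X d" "\<And>x y. x \<in> X \<Longrightarrow> y \<in> X \<Longrightarrow> d x y = ereal (dX x y)"
    and "x \<in> X" "y \<in> X" "z \<in> X"
  shows "dX x z \<le> dX x y + dX y z"
  using semimetric_triangle[OF assms(1,3-5)] assms(2-5) by (metis ereal_less_eq(3) plus_ereal.simps(1))

lemma reverse_distance_bound_transfer:
  fixes dX :: "'a \<Rightarrow> 'a \<Rightarrow> real" and dY :: "'b \<Rightarrow> 'b \<Rightarrow> real"
  assumes triangle: "\<And>x y z. x \<in> Y \<Longrightarrow> y \<in> Y \<Longrightarrow> z \<in> Y \<Longrightarrow> dY x z \<le> dY x y + dY y z"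
    and fY: "f ` X \<subseteq> Y" and lam: "0 \<le> lam" and L: "0 \<le> L"
    and lower: "\<And>x y. x \<in> X \<Longrightarrow> y \<in> X \<Longrightarrow> dX x y \<le> lam * (dY (f x) (f y) + eps)"
    and upper: "\<And>x y. x \<in> X \<Longrightarrow> y \<in> X \<Longrightarrow> dY (f x) (f y) \<le> lam * dX x y + eps"
    and net: "\<And>y. y \<in> Y \<Longrightarrow> \<exists>x\<in>X. dY y (f x) \<le> mu \<and> dY (f x) y \<le> mu"
    and rev: "\<And>x y. x \<in> X \<Longrightarrow> y \<in> X \<Longrightarrow> dX y x \<le> L * dX x y + E"
    and y: "y1 \<in> Y" "y2 \<in> Y"
  shows "dY y2 y1 \<le> (lam * L * lam) * dY y1 y2
           + (2 * mu + eps + lam * E + lam * L * lam * (2 * mu + eps))"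
proof -
  obtain x1 x2 where x: "x1 \<in> X" "x2 \<in> X"
    and near1: "dY y1 (f x1) \<le> mu" "dY (f x1) y1 \<le> mu"
    and near2: "dY y2 (f x2) \<le> mu" "dY (f x2) y2 \<le> mu"
    using net y by blast
  have fx: "f x1 \<in> Y" "f x2 \<in> Y" using fY x by auto
  have detour_back: "dY y2 y1 \<le> 2 * mu + dY (f x2) (f x1)"
    using triangle[OF y(2) fx(2) y(1)] triangle[OF fx(2) fx(1) y(1)] near1 near2 by linarith
  have detour_forth: "dY (f x1) (f x2) \<le> 2 * mu + dY y1 y2"
    using triangle[OF fx(1) y(1) fx(2)] triangle[OF y fx(2)] near1 near2 by linarith
  have "dX x1 x2 \<le> lam * (2 * mu + dY y1 y2 + eps)"
    using lower[OF x] detour_forth lam by (smt (verit) mult_left_mono)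
  then have "dX x2 x1 \<le> L * (lam * (2 * mu + dY y1 y2 + eps)) + E"
    using rev[OF x] L by (smt (verit) mult_left_mono)
  then have "lam * dX x2 x1 \<le> lam * (L * (lam * (2 * mu + dY y1 y2 + eps)) + E)"
    using lam by (rule mult_left_mono)
  then show ?thesis
    using detour_back upper[OF x(2,1)] by (simp add: algebra_simps)
qed

theorem corollary2p11:
  fixes X :: "'a set" and d :: "'a \<Rightarrow> 'a \<Rightarrow> ereal"
    and Y :: "'b set" and e :: "'b \<Rightarrow> 'b \<Rightarrow> ereal"
  assumes "semimetric X d" and "semimetric Y e"
    and "quasi_isometric X d Y e"
    and "quasi_metric X d"
  shows "quasi_metric Y e"
proof -
  obtain f where f: "quasi_isometry X d Y e f"
    using assms(3) unfolding quasi_isometric_def by blast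
  have X_sc: "strongly_connected X d" using assms(4) unfolding quasi_metric_def by blast
  have Y_sc: "strongly_connected Y e" by (rule quasi_isometry_strongly_connected[OF assms(2) f X_sc])
  define dX where "dX x y = real_of_ereal (d x y)" for x y
  define dY where "dY x y = real_of_ereal (e x y)" for x y
  have d_real: "\<And>x y. x \<in> X \<Longrightarrow> y \<in> X \<Longrightarrow> d x y = ereal (dX x y)"
    unfolding dX_def by (rule strongly_connected_semimetric_real[OF assms(1) X_sc])
  have e_real: "\<And>x y. x \<in> Y \<Longrightarrow> y \<in> Y \<Longrightarrow> e x y = ereal (dY x y)"
    unfolding dY_def by (rule strongly_connected_semimetric_real[OF assms(2) Y_sc])
  obtain lam eps mu where fY: "f ` X \<subseteq> Y" and lam: "1 \<le> lam" "0 \<le> eps" "0 \<le> mu"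
    and f_bounds: "\<And>x y. x \<in> X \<Longrightarrow> y \<in> X \<Longrightarrow> dX x y \<le> lam * (dY (f x) (f y) + eps)"
      "\<And>x y. x \<in> X \<Longrightarrow> y \<in> X \<Longrightarrow> dY (f x) (f y) \<le> lam * dX x y + eps"
      "\<And>y. y \<in> Y \<Longrightarrow> \<exists>x\<in>X. dY y (f x) \<le> mu \<and> dY (f x) y \<le> mu"
    using quasi_isometry_real_bounds[OF f d_real e_real] by blast
  obtain L E where L: "1 \<le> L" "0 \<le> E"
    and rev: "\<And>x y. x \<in> X \<Longrightarrow> y \<in> X \<Longrightarrow> dX y x \<le> L * dX x y + E"
    using quasi_metric_realE[OF assms(4) d_real] by blast
  have triangle: "\<And>x y z. x \<in> Y \<Longrightarrow> y \<in> Y \<Longrightarrow> z \<in> Y \<Longrightarrow> dY x z \<le> dY x y + dY y z"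
    using assms(2) e_real by (rule semimetric_real_triangle)
  have nonneg: "0 \<le> lam" "0 \<le> L" using lam L by simp_all
  show ?thesis
    using e_real
  proof (rule quasi_metric_realI)
    show "1 \<le> lam * L * lam" using lam L by (simp add: mult_ge1_I)
    show "0 \<le> 2 * mu + eps + lam * E + lam * L * lam * (2 * mu + eps)" using lam L by simp
    show "dY y x \<le> (lam * L * lam) * dY x y
            + (2 * mu + eps + lam * E + lam * L * lam * (2 * mu + eps))" if "x \<in> Y" "y \<in> Y" for x y
      using triangle fY nonneg f_bounds rev that by (rule reverse_distance_bound_transfer)
  qed
qed

end
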